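(* Let $\Phi$ be a unit norm tight frame in $\mathbb{R}^d$ with $K$ atoms, frame constant $A=K/d$ and coherence $\mu$, and let $1\le S\le K$. Let $c\in\mathbb{R}^K$ with $c_1\ge c_2\ge\dots\ge c_K\ge0$ and $\|c\|_2=1$, let $x=c_{p,\sigma}$ with probability $(2^KK!)^{-1}$ for every permutation $p$ and sign sequence $\sigma$, and let $y=\Phi x$. Suppose that for all $\sigma,p$, $$\|P_{I_p}(\Phi)\Phi c_{p,\sigma}\|_2>\max_{|I|\le S,\ I\ne I_p}\|P_I(\Phi)\Phi c_{p,\sigma}\|_2,\qquad I_p:=p^{-1}(\{1,\dots,S\}).$$ Then $\Phi$ is a local maximum of $$\max_{\Psi\in\mathcal D}\ \mathbb{E}_y\Big(\max_{|I|\le S}\|P_I(\Psi)y\|_2^2\Big).$$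
   Context: $\mathcal D$ is the set of dictionaries $\Psi=(\psi_1,\dots,\psi_K)$, $\psi_i\in\mathbb{R}^d$, $\|\psi_i\|_2=1$. For $I\subseteq\{1,\dots,K\}$, $\Psi_I$ is the submatrix with columns $(\psi_i)_{i\in I}$ and $P_I(\Psi)=\Psi_I\Psi_I^\dagger$ is the orthogonal projection onto the span of $(\psi_i)_{i\in I}$ ($\dagger$ = Moore–Penrose pseudoinverse). Unit norm tight frame with frame constant $A$: $\sum_i|\langle\phi_i,v\rangle|^2=A\|v\|_2^2$ for all $v$; coherence $\mu=\max_{i\ne j}|\langle\phi_i,\phi_j\rangle|$. $c_{p,\sigma}(i)=\sigma_ic_{p(i)}$. *)

theory Defs
  imports "HOL-Analysis.Analysis" "HOL-Combinatorics.Permutations"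
begin

definition is_dict :: "nat \<Rightarrow> (nat \<Rightarrow> real^'d) \<Rightarrow> bool" where
  "is_dict K \<Psi> \<longleftrightarrow> (\<forall>i\<in>{1..K}. norm (\<Psi> i) = 1)"

definition proj_span :: "(real^'d) set \<Rightarrow> real^'d \<Rightarrow> real^'d" where
  "proj_span B v = (THE p. p \<in> span B \<and> (\<forall>w\<in>span B. inner (v - p) w = 0))"

definition P :: "nat set \<Rightarrow> (nat \<Rightarrow> real^'d) \<Rightarrow> real^'d \<Rightarrow> real^'d" where
  "P I \<Psi> v = proj_span (\<Psi> ` I) v"

definition synth :: "nat \<Rightarrow> (nat \<Rightarrow> real^'d) \<Rightarrow> (nat \<Rightarrow> real) \<Rightarrow> real^'d" where
  "synth K \<Psi> x = (\<Sum>i=1..K. x i *\<^sub>R \<Psi> i)"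

definition unit_norm_tight_frame :: "nat \<Rightarrow> (nat \<Rightarrow> real^'d) \<Rightarrow> real \<Rightarrow> bool" where
  "unit_norm_tight_frame K \<Phi> A \<longleftrightarrow> is_dict K \<Phi> \<and>
     (\<forall>v. (\<Sum>i=1..K. (inner (\<Phi> i) v)\<^sup>2) = A * (norm v)\<^sup>2)"

definition c_ps :: "(nat \<Rightarrow> real) \<Rightarrow> (nat \<Rightarrow> nat) \<Rightarrow> (nat \<Rightarrow> real) \<Rightarrow> nat \<Rightarrow> real" where
  "c_ps c p \<sigma> i = \<sigma> i * c (p i)"

definition perms :: "nat \<Rightarrow> (nat \<Rightarrow> nat) set" where
  "perms K = {p. p permutes {1..K}}"

definition signs :: "nat \<Rightarrow> (nat \<Rightarrow> real) set" where
  "signs K = PiE {1..K} (\<lambda>_. {-1, 1})"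

definition objective :: "nat \<Rightarrow> nat \<Rightarrow> (nat \<Rightarrow> real^'d) \<Rightarrow> (nat \<Rightarrow> real) \<Rightarrow> (nat \<Rightarrow> real^'d) \<Rightarrow> real" where
  "objective K S \<Phi> c \<Psi> =
     (1 / (2 ^ K * fact K)) *
     (\<Sum>p\<in>perms K. \<Sum>\<sigma>\<in>signs K.
        Max {(norm (P I \<Psi> (synth K \<Phi> (c_ps c p \<sigma>))))\<^sup>2 | I. I \<subseteq> {1..K} \<and> card I \<le> S})"

definition local_max_on_dicts :: "nat \<Rightarrow> ((nat \<Rightarrow> real^'d) \<Rightarrow> real) \<Rightarrow> (nat \<Rightarrow> real^'d) \<Rightarrow> bool" where
  "local_max_on_dicts K F \<Phi> \<longleftrightarrow> is_dict K \<Phi> \<and>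
     (\<exists>\<epsilon>>0. \<forall>\<Psi>. is_dict K \<Psi> \<and> (\<forall>i\<in>{1..K}. norm (\<Psi> i - \<Phi> i) < \<epsilon>) \<longrightarrow> F \<Psi> \<le> F \<Phi>)"

end

theory Submission
  imports Defs
begin

text \<open>Averaging over the signs removes all cross terms, so the expected energy on a fixed support I
  is a weighted sum of the energies ||P_I(\<Psi>) \<phi>_i||^2 of single atoms. The gap hypothesis forces any
  S atoms of \<Phi> to be linearly independent, which makes the strict gap stable: for \<Psi> near \<Phi> the
  maximising support is still I_p, and the objective becomes the oracle objective
  \<Sum>_p \<Sum>_i c_{p(i)}^2 ||P_{I_p}(\<Psi>) \<phi>_i||^2. Grouping the permutations by I_p, the weights
  \<Sum>_p c_{p(i)}^2 are constant off I_p and larger on I_p, while the tight frame identity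
  \<Sum>_i ||P_V \<phi>_i||^2 = A dim V caps the total energy; at \<Psi> = \<Phi> the terms on I_p are already 1
  and the cap is attained, so the oracle objective is maximal there.\<close>

section \<open>Orthogonal projections\<close>

lemma proj_span_unique:
  fixes V :: "(real^'d) set"
  assumes "p \<in> span V" "\<And>w. w \<in> span V \<Longrightarrow> inner (v - p) w = 0"
  shows "proj_span V v = p"
  unfolding proj_span_def
proof (rule the_equality)
  show "p \<in> span V \<and> (\<forall>w\<in>span V. inner (v - p) w = 0)" using assms by auto
next
  fix q assume q: "q \<in> span V \<and> (\<forall>w\<in>span V. inner (v - q) w = 0)"
  have "p - q \<in> span V" using assms q by (simp add: span_diff)
  then have "inner (p - q) (p - q) = inner (v - q) (p - q) - inner (v - p) (p - q)"
    by (simp add: inner_diff_left)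
  also have "\<dots> = 0" using \<open>p - q \<in> span V\<close> assms q by auto
  finally show "q = p" by simp
qed

lemma proj_span_orthogonal_decomp:
  fixes V :: "(real^'d) set"
  shows "proj_span V v \<in> span V \<and> (\<forall>w\<in>span V. inner (v - proj_span V v) w = 0)"
proof -
  obtain y z where "y \<in> span V" "\<And>w. w \<in> span V \<Longrightarrow> orthogonal z w" "v = y + z"
    by (rule orthogonal_subspace_decomp_exists[of V v]) iprover
  moreover from this have "proj_span V v = y"
    by (intro proj_span_unique) (auto simp: orthogonal_def)
  ultimately show ?thesis by (simp add: orthogonal_def)
qed

lemma proj_span_in_span: "proj_span V v \<in> span V"
  using proj_span_orthogonal_decomp by blast

lemma proj_span_orthogonal: "w \<in> span V \<Longrightarrow> inner (v - proj_span V v) w = 0"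
  using proj_span_orthogonal_decomp by blast

lemma inner_proj_span: "w \<in> span V \<Longrightarrow> inner v w = inner (proj_span V v) w"
  using proj_span_orthogonal[of w V v] by (simp add: inner_diff_left)

lemma proj_span_id: "(v::real^'d) \<in> span V \<Longrightarrow> proj_span V v = v"
  by (rule proj_span_unique) auto

lemma proj_span_cong: "span V = span W \<Longrightarrow> proj_span V v = proj_span W v"
  unfolding proj_span_def by simp

lemma norm_proj_span_sq: "(norm (proj_span V v))\<^sup>2 = inner v (proj_span V v)"
  using inner_proj_span[where w="proj_span V v" and V=V and v=v, OF proj_span_in_span]
  by (simp add: power2_norm_eq_inner)

lemma norm_proj_span_le: "norm (proj_span V v) \<le> norm v"
proof -
  have "(norm (proj_span V v))\<^sup>2 \<le> norm v * norm (proj_span V v)"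
    unfolding norm_proj_span_sq by (rule norm_cauchy_schwarz)
  then have "norm (proj_span V v) * norm (proj_span V v) \<le> norm v * norm (proj_span V v)"
    by (simp add: power2_eq_square)
  then show ?thesis
    by (cases "norm (proj_span V v) = 0") (auto simp: mult_le_cancel_right)
qed

lemma norm_proj_span_sq_orthonormal_basis:
  fixes V :: "(real^'d) set"
  obtains B where "finite B" "card B = dim V" "\<And>u. u \<in> B \<Longrightarrow> norm u = 1"
    "\<And>v. (norm (proj_span V v))\<^sup>2 = (\<Sum>u\<in>B. (inner v u)\<^sup>2)"
proof -
  obtain B where B: "B \<subseteq> span V" "pairwise orthogonal B" "\<And>u. u \<in> B \<Longrightarrow> norm u = 1"
    "independent B" "card B = dim (span V)" "span B = span V"
    using orthonormal_basis_subspace[OF subspace_span[of V]] by metis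
  have fin: "finite B" using B(4) independent_imp_finite by blast
  have inner_basis: "inner u u' = (if u = u' then 1 else 0)" if "u \<in> B" "u' \<in> B" for u u'
    using B(2,3) that by (auto simp: pairwise_def orthogonal_def dot_square_norm)
  have proj: "proj_span V v = (\<Sum>u\<in>B. inner v u *\<^sub>R u)" for v
  proof (rule proj_span_unique)
    show "(\<Sum>u\<in>B. inner v u *\<^sub>R u) \<in> span V"
      using B(1) by (intro span_sum span_mul) auto
    have "inner (v - (\<Sum>u\<in>B. inner v u *\<^sub>R u)) u' = 0" if "u' \<in> B" for u'
      using fin that by (simp add: inner_diff_left inner_sum_left inner_basis if_distrib cong: if_cong)
    then show "inner (v - (\<Sum>u\<in>B. inner v u *\<^sub>R u)) w = 0" if "w \<in> span V" for w
      using orthogonal_to_span[of w B] that B(6) by (auto simp: orthogonal_def)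
  qed
  have "(norm (proj_span V v))\<^sup>2 = (\<Sum>u\<in>B. (inner v u)\<^sup>2)" for v
  proof -
    have "(norm (\<Sum>u\<in>B. inner v u *\<^sub>R u))\<^sup>2 = (\<Sum>u\<in>B. (norm (inner v u *\<^sub>R u))\<^sup>2)"
      by (rule norm_sum_Pythagorean[OF fin])
         (use B(2) in \<open>simp add: pairwise_def orthogonal_def\<close>)
    then show ?thesis using B(3) by (simp add: proj power2_abs)
  qed
  then show thesis by (intro that[of B] fin B(3)) (simp_all add: B(5))
qed

lemma tight_frame_sum_norm_proj_span_sq:
  fixes \<Phi> :: "nat \<Rightarrow> real^'d" and V :: "(real^'d) set"
  assumes "\<And>v. (\<Sum>i=1..K. (inner (\<Phi> i) v)\<^sup>2) = A * (norm v)\<^sup>2"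
  shows "(\<Sum>i=1..K. (norm (proj_span V (\<Phi> i)))\<^sup>2) = A * dim V"
proof -
  obtain B where B: "finite B" "card B = dim V" "\<And>u. u \<in> B \<Longrightarrow> norm u = 1"
    "\<And>v. (norm (proj_span V v))\<^sup>2 = (\<Sum>u\<in>B. (inner v u)\<^sup>2)"
    by (rule norm_proj_span_sq_orthonormal_basis[of V]) iprover
  have "(\<Sum>i=1..K. (norm (proj_span V (\<Phi> i)))\<^sup>2) = (\<Sum>u\<in>B. \<Sum>i=1..K. (inner (\<Phi> i) u)\<^sup>2)"
    unfolding B(4) by (rule sum.swap)
  also have "\<dots> = A * dim V" using assms B(2,3) by simp
  finally show ?thesis .
qed

section \<open>Averaging over signs\<close>

lemma sum_signs_mult:
  fixes A :: "'a set"
  assumes "finite A" "i \<in> A" "j \<in> A"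
  shows "(\<Sum>\<sigma>\<in>PiE A (\<lambda>_. {-1, 1::real}). \<sigma> i * \<sigma> j) = (if i = j then 2 ^ card A else 0)"
proof (cases "i = j")
  case True
  have "(\<Sum>\<sigma>\<in>PiE A (\<lambda>_. {-1, 1::real}). \<sigma> i * \<sigma> j) = (\<Sum>\<sigma>\<in>PiE A (\<lambda>_. {-1, 1::real}). 1)"
    using assms(2) True by (intro sum.cong) (auto simp: PiE_def Pi_def)
  then show ?thesis using True assms(1) by (simp add: card_PiE)
next
  case False
  let ?P = "PiE A (\<lambda>_. {-1, 1::real})"
  define flip where "flip \<sigma> = \<sigma>(i := - \<sigma> i)" for \<sigma> :: "'a \<Rightarrow> real"
  have flip_in: "flip \<sigma> \<in> ?P" if "\<sigma> \<in> ?P" for \<sigma>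
    using that assms(2) unfolding flip_def by (auto simp: PiE_def Pi_def extensional_def)
  have flip_flip: "flip (flip \<sigma>) = \<sigma>" for \<sigma> unfolding flip_def by auto
  have "(\<Sum>\<sigma>\<in>?P. \<sigma> i * \<sigma> j) = (\<Sum>\<sigma>\<in>?P. flip \<sigma> i * flip \<sigma> j)"
    by (rule sum.reindex_bij_witness[of _ flip flip]) (auto simp: flip_in flip_flip)
  also have "\<dots> = - (\<Sum>\<sigma>\<in>?P. \<sigma> i * \<sigma> j)"
    using False by (simp add: flip_def sum_negf[symmetric])
  finally show ?thesis using False by simp
qed

lemma sum_signs_square:
  fixes A :: "'a set" and a :: "'a \<Rightarrow> real"
  assumes "finite A"
  shows "(\<Sum>\<sigma>\<in>PiE A (\<lambda>_. {-1, 1::real}). (\<Sum>i\<in>A. \<sigma> i * a i)\<^sup>2) = 2 ^ card A * (\<Sum>i\<in>A. (a i)\<^sup>2)"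
proof -
  let ?P = "PiE A (\<lambda>_. {-1, 1::real})"
  have "(\<Sum>\<sigma>\<in>?P. (\<Sum>i\<in>A. \<sigma> i * a i)\<^sup>2) = (\<Sum>\<sigma>\<in>?P. \<Sum>i\<in>A. \<Sum>j\<in>A. (a i * a j) * (\<sigma> i * \<sigma> j))"
    by (simp add: power2_eq_square sum_product algebra_simps)
  also have "\<dots> = (\<Sum>i\<in>A. \<Sum>j\<in>A. (a i * a j) * (\<Sum>\<sigma>\<in>?P. \<sigma> i * \<sigma> j))"
    by (simp add: sum_distrib_left sum.swap[of _ ?P])
  also have "\<dots> = 2 ^ card A * (\<Sum>i\<in>A. (a i)\<^sup>2)"
    using assms by (simp add: sum_signs_mult if_distrib sum_distrib_left power2_eq_square
        mult.commute cong: if_cong)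
  finally show ?thesis .
qed

lemma sum_signs_norm_proj_span_synth_sq:
  fixes \<Phi> :: "nat \<Rightarrow> real^'d" and c :: "nat \<Rightarrow> real"
  shows "(\<Sum>\<sigma>\<in>signs K. (norm (proj_span V (synth K \<Phi> (c_ps c p \<sigma>))))\<^sup>2)
     = 2 ^ K * (\<Sum>i=1..K. (c (p i))\<^sup>2 * (norm (proj_span V (\<Phi> i)))\<^sup>2)"
proof -
  obtain B where B: "finite B" "\<And>v. (norm (proj_span V v))\<^sup>2 = (\<Sum>u\<in>B. (inner v u)\<^sup>2)"
    by (rule norm_proj_span_sq_orthonormal_basis[of V]) iprover
  have "inner (synth K \<Phi> (c_ps c p \<sigma>)) u = (\<Sum>i\<in>{1..K}. \<sigma> i * (c (p i) * inner (\<Phi> i) u))" for \<sigma> u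
    unfolding synth_def c_ps_def by (simp add: inner_sum_left mult.assoc)
  then have "(\<Sum>\<sigma>\<in>signs K. (norm (proj_span V (synth K \<Phi> (c_ps c p \<sigma>))))\<^sup>2)
      = (\<Sum>\<sigma>\<in>signs K. \<Sum>u\<in>B. (\<Sum>i\<in>{1..K}. \<sigma> i * (c (p i) * inner (\<Phi> i) u))\<^sup>2)"
    by (simp add: B(2))
  also have "\<dots> = (\<Sum>u\<in>B. \<Sum>\<sigma>\<in>signs K. (\<Sum>i\<in>{1..K}. \<sigma> i * (c (p i) * inner (\<Phi> i) u))\<^sup>2)"
    by (rule sum.swap)
  also have "\<dots> = (\<Sum>u\<in>B. 2 ^ K * (\<Sum>i\<in>{1..K}. (c (p i) * inner (\<Phi> i) u)\<^sup>2))"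
    unfolding signs_def by (simp add: sum_signs_square)
  also have "\<dots> = 2 ^ K * (\<Sum>i\<in>{1..K}. (c (p i))\<^sup>2 * (\<Sum>u\<in>B. (inner (\<Phi> i) u)\<^sup>2))"
    by (simp add: sum_distrib_left sum.swap[of _ B] power_mult_distrib)
  also have "\<dots> = 2 ^ K * (\<Sum>i=1..K. (c (p i))\<^sup>2 * (norm (proj_span V (\<Phi> i)))\<^sup>2)"
    by (simp add: B(2))
  finally show ?thesis .
qed

section \<open>Permutations with prescribed leading atoms\<close>

text \<open>The support I_p of the paper: the atoms carrying the S largest coefficients of c_{p,\<sigma>}.\<close>
definition leading_atoms :: "nat \<Rightarrow> nat \<Rightarrow> (nat \<Rightarrow> nat) \<Rightarrow> nat set" where
  "leading_atoms K S p = p -` {1..S} \<inter> {1..K}"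

lemma card_leading_atoms:
  assumes "p permutes {1..K}" "S \<le> K"
  shows "card (leading_atoms K S p) = S"
proof -
  have "x \<in> {1..K}" if "p x \<in> {1..S}" for x
    using that assms(2) permutes_in_image[OF assms(1), of x] by auto
  then have "leading_atoms K S p = p -` {1..S}"
    unfolding leading_atoms_def by blast
  moreover have "card (p -` {1..S}) = card {1..S}"
    by (rule card_vimage_inj[OF permutes_inj[OF assms(1)]]) (use permutes_surj[OF assms(1)] in blast)
  ultimately show ?thesis by simp
qed

lemma leading_atoms_subset: "leading_atoms K S p \<subseteq> {1..K}"
  unfolding leading_atoms_def by blast

lemma permutes_with_leading_atoms:
  assumes I: "I \<subseteq> {1..K}" "card I = S" and "S \<le> K"
  obtains p where "p permutes {1..K}" "leading_atoms K S p = I"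
proof -
  have fin: "finite I" using I(1) finite_subset by blast
  obtain f where f: "bij_betw f I {1..S}"
    using finite_same_card_bij[OF fin, of "{1..S}"] I(2) by auto
  have "card ({1..K} - I) = card {S+1..K}" using I fin by (simp add: card_Diff_subset)
  then obtain g where g: "bij_betw g ({1..K} - I) {S+1..K}"
    using finite_same_card_bij[of "{1..K} - I" "{S+1..K}"] by auto
  define p where "p x = (if x \<in> I then f x else if x \<in> {1..K} then g x else x)" for x
  have p_I: "bij_betw p I {1..S}"
    using f by (rule bij_betw_cong[THEN iffD1, rotated]) (simp add: p_def)
  have p_rest: "bij_betw p ({1..K} - I) {S+1..K}"
    using g by (rule bij_betw_cong[THEN iffD1, rotated]) (simp add: p_def)
  have "bij_betw p (I \<union> ({1..K} - I)) ({1..S} \<union> {S+1..K})"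
    by (rule bij_betw_combine[OF p_I p_rest]) auto
  moreover have "I \<union> ({1..K} - I) = {1..K}" "{1..S} \<union> {S+1..K} = {1..K}"
    using I(1) \<open>S \<le> K\<close> by auto
  ultimately have "bij_betw p {1..K} {1..K}" by simp
  then have "p permutes {1..K}"
    by (rule bij_imp_permutes) (use I(1) in \<open>auto simp: p_def\<close>)
  moreover have "leading_atoms K S p = I"
    unfolding leading_atoms_def
  proof (intro set_eqI iffI)
    fix x assume x: "x \<in> p -` {1..S} \<inter> {1..K}"
    show "x \<in> I"
    proof (rule ccontr)
      assume "x \<notin> I"
      then have "p x \<in> {S+1..K}" using x bij_betwE[OF p_rest] by blast
      then show False using x by auto
    qed
  next
    fix x assume "x \<in> I"
    then show "x \<in> p -` {1..S} \<inter> {1..K}" using bij_betwE[OF p_I] I(1) by auto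
  qed
  ultimately show thesis by (rule that)
qed

definition perms_with_leading_atoms :: "nat \<Rightarrow> nat \<Rightarrow> nat set \<Rightarrow> (nat \<Rightarrow> nat) set" where
  "perms_with_leading_atoms K S I = {p \<in> perms K. leading_atoms K S p = I}"

lemma transpose_mem_iff:
  assumes "i \<in> A \<longleftrightarrow> j \<in> A"
  shows "Transposition.transpose i j x \<in> A \<longleftrightarrow> x \<in> A"
  using assms by (simp add: Transposition.transpose_def)

lemma perms_with_leading_atoms_transpose:
  assumes p: "p \<in> perms_with_leading_atoms K S I" and ij: "i \<in> {1..K} - I" "j \<in> {1..K} - I"
  shows "p \<circ> Transposition.transpose i j \<in> perms_with_leading_atoms K S I"
proof -
  let ?t = "Transposition.transpose i j"
  have p_perm: "p permutes {1..K}" and p_lead: "leading_atoms K S p = I"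
    using p unfolding perms_with_leading_atoms_def perms_def by auto
  have "x \<in> leading_atoms K S (p \<circ> ?t) \<longleftrightarrow> x \<in> I" for x
  proof -
    have "?t x \<in> {1..K} \<longleftrightarrow> x \<in> {1..K}"
      by (rule transpose_mem_iff) (use ij in blast)
    then have "x \<in> leading_atoms K S (p \<circ> ?t) \<longleftrightarrow> ?t x \<in> leading_atoms K S p"
      unfolding leading_atoms_def by simp
    also have "\<dots> \<longleftrightarrow> x \<in> I"
      unfolding p_lead by (rule transpose_mem_iff) (use ij in blast)
    finally show ?thesis .
  qed
  moreover have "p \<circ> ?t permutes {1..K}"
    using ij by (intro permutes_compose[OF _ p_perm] permutes_swap_id) auto
  ultimately show ?thesis
    unfolding perms_with_leading_atoms_def perms_def by auto
qed

lemma finite_perms: "finite (perms K)"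
  unfolding perms_def using finite_permutations[of "{1..K}"] by simp

lemma sum_perms_with_leading_atoms_swap:
  assumes "i \<in> {1..K} - I" "j \<in> {1..K} - I"
  shows "(\<Sum>p\<in>perms_with_leading_atoms K S I. h (p i)) = (\<Sum>p\<in>perms_with_leading_atoms K S I. h (p j))"
proof -
  let ?t = "\<lambda>p. p \<circ> Transposition.transpose i j"
  have tt: "?t (?t p) = p" for p by (auto simp: fun_eq_iff Transposition.transpose_def)
  have "(\<Sum>p\<in>perms_with_leading_atoms K S I. h (p i)) = (\<Sum>p\<in>perms_with_leading_atoms K S I. h (?t p i))"
    by (rule sum.reindex_bij_witness[of _ ?t ?t])
       (auto simp: tt perms_with_leading_atoms_transpose[OF _ assms])
  then show ?thesis by simp
qed

section \<open>The oracle objective is maximal at a tight frame\<close>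

lemma weighted_sum_le_of_dominant_weights:
  fixes W g1 g2 :: "nat \<Rightarrow> real"
  assumes "finite U" "I \<subseteq> U" and W_nonneg: "\<And>i. i \<in> U \<Longrightarrow> 0 \<le> W i"
    and W_const: "\<And>j j'. j \<in> U - I \<Longrightarrow> j' \<in> U - I \<Longrightarrow> W j = W j'"
    and W_dom: "\<And>i j. i \<in> I \<Longrightarrow> j \<in> U - I \<Longrightarrow> W j \<le> W i"
    and g: "\<And>i. i \<in> I \<Longrightarrow> g1 i \<le> 1 \<and> g2 i = 1"
    and sums: "sum g1 U \<le> sum g2 U"
  shows "(\<Sum>i\<in>U. W i * g1 i) \<le> (\<Sum>i\<in>U. W i * g2 i)"
proof -
  obtain \<beta> where "0 \<le> \<beta>" and \<beta>_off: "\<And>j. j \<in> U - I \<Longrightarrow> W j = \<beta>" and \<beta>_on: "\<And>i. i \<in> I \<Longrightarrow> \<beta> \<le> W i"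
  proof (cases "U - I = {}")
    case True
    show thesis by (rule that[of 0]) (use True W_nonneg \<open>I \<subseteq> U\<close> in auto)
  next
    case False
    then obtain j0 where j0: "j0 \<in> U - I" by blast
    show thesis
    proof (rule that[of "W j0"])
      show "0 \<le> W j0" using j0 W_nonneg by simp
      show "W j = W j0" if "j \<in> U - I" for j using W_const[OF that j0] .
      show "W j0 \<le> W i" if "i \<in> I" for i using W_dom[OF that j0] .
    qed
  qed
  \<comment> \<open>subtracting the constant weight \<beta> leaves nonnegative weights supported on I\<close>
  have split: "(\<Sum>i\<in>U. W i * g i) = (\<Sum>i\<in>I. (W i - \<beta>) * g i) + \<beta> * sum g U" for g :: "nat \<Rightarrow> real"
  proof -
    have "(\<Sum>i\<in>U. W i * g i) = (\<Sum>i\<in>U. (W i - \<beta>) * g i) + \<beta> * sum g U"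
      by (simp add: algebra_simps sum.distrib sum_distrib_left sum_subtractf)
    also have "(\<Sum>i\<in>U. (W i - \<beta>) * g i) = (\<Sum>i\<in>I. (W i - \<beta>) * g i)"
      using assms(1,2) \<beta>_off by (intro sum.mono_neutral_right) auto
    finally show ?thesis .
  qed
  have "(\<Sum>i\<in>I. (W i - \<beta>) * g1 i) \<le> (\<Sum>i\<in>I. (W i - \<beta>) * g2 i)"
    using g \<beta>_on by (intro sum_mono) (simp add: mult_left_le)
  moreover have "\<beta> * sum g1 U \<le> \<beta> * sum g2 U" using \<open>0 \<le> \<beta>\<close> sums by (rule mult_left_mono[rotated])
  ultimately show ?thesis unfolding split by linarith
qed

text \<open>The objective with the maximising support replaced by I_p and the signs averaged out,
  up to the factor 2^K K!.\<close>
definition oracle_objective ::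
    "nat \<Rightarrow> nat \<Rightarrow> (nat \<Rightarrow> real^'d) \<Rightarrow> (nat \<Rightarrow> real) \<Rightarrow> (nat \<Rightarrow> real^'d) \<Rightarrow> real" where
  "oracle_objective K S \<Phi> c \<Psi> =
     (\<Sum>p\<in>perms K. \<Sum>i=1..K. (c (p i))\<^sup>2 * (norm (P (leading_atoms K S p) \<Psi> (\<Phi> i)))\<^sup>2)"

lemma sum_leading_weights_mono:
  fixes c :: "nat \<Rightarrow> real"
  assumes c_dec: "\<And>i j. 1 \<le> i \<Longrightarrow> i \<le> j \<Longrightarrow> j \<le> K \<Longrightarrow> c j \<le> c i" and c_nonneg: "0 \<le> c K"
    and "i \<in> I" "j \<in> {1..K} - I"
  shows "(\<Sum>p\<in>perms_with_leading_atoms K S I. (c (p j))\<^sup>2)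
      \<le> (\<Sum>p\<in>perms_with_leading_atoms K S I. (c (p i))\<^sup>2)"
proof (rule sum_mono)
  fix p assume "p \<in> perms_with_leading_atoms K S I"
  then have p_perm: "p permutes {1..K}" and p_lead: "p -` {1..S} \<inter> {1..K} = I"
    unfolding perms_with_leading_atoms_def perms_def leading_atoms_def by auto
  have "p i \<in> {1..S}" "p j \<notin> {1..S}"
    using assms(3,4) p_lead by blast+
  moreover have "p j \<in> {1..K}"
    using assms(4) permutes_in_image[OF p_perm] by blast
  ultimately have "c (p j) \<le> c (p i)" "c K \<le> c (p j)"
    by (auto intro!: c_dec)
  then have "c (p j) \<le> c (p i)" "0 \<le> c (p j)"
    using c_nonneg by auto
  then show "(c (p j))\<^sup>2 \<le> (c (p i))\<^sup>2" by (simp add: power_mono)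
qed

lemma sum_perms_with_leading_atoms_oracle_le:
  fixes \<Phi> \<Psi> :: "nat \<Rightarrow> real^'d" and c :: "nat \<Rightarrow> real"
  assumes frame: "unit_norm_tight_frame K \<Phi> A" and "0 \<le> A"
    and c_dec: "\<And>i j. 1 \<le> i \<Longrightarrow> i \<le> j \<Longrightarrow> j \<le> K \<Longrightarrow> c j \<le> c i" and c_nonneg: "0 \<le> c K"
    and I: "I \<subseteq> {1..K}" and dim_I: "dim (\<Phi> ` I) = card I"
  shows "(\<Sum>p\<in>perms_with_leading_atoms K S I. \<Sum>i=1..K. (c (p i))\<^sup>2 * (norm (P I \<Psi> (\<Phi> i)))\<^sup>2)
       \<le> (\<Sum>p\<in>perms_with_leading_atoms K S I. \<Sum>i=1..K. (c (p i))\<^sup>2 * (norm (P I \<Phi> (\<Phi> i)))\<^sup>2)"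
proof -
  let ?X = "perms_with_leading_atoms K S I"
  define W where "W i = (\<Sum>p\<in>?X. (c (p i))\<^sup>2)" for i
  define g where "g \<Psi>' i = (norm (P I \<Psi>' (\<Phi> i)))\<^sup>2" for \<Psi>' :: "nat \<Rightarrow> real^'d" and i
  have regroup: "(\<Sum>p\<in>?X. \<Sum>i=1..K. (c (p i))\<^sup>2 * g \<Psi>' i) = (\<Sum>i=1..K. W i * g \<Psi>' i)" for \<Psi>'
    unfolding W_def by (simp add: sum.swap[of _ ?X] sum_distrib_right)
  have atoms: "norm (\<Phi> i) = 1" if "i \<in> {1..K}" for i
    using frame that unfolding unit_norm_tight_frame_def is_dict_def by blast
  have tight: "\<And>v. (\<Sum>i=1..K. (inner (\<Phi> i) v)\<^sup>2) = A * (norm v)\<^sup>2"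
    using frame unfolding unit_norm_tight_frame_def by blast
  have "finite I" using I finite_subset by blast
  have "sum (g \<Psi>) {1..K} = A * dim (\<Psi> ` I)"
    unfolding g_def P_def by (rule tight_frame_sum_norm_proj_span_sq[OF tight])
  also have "\<dots> \<le> A * dim (\<Phi> ` I)"
  proof -
    have "dim (\<Psi> ` I) \<le> card (\<Psi> ` I)" using \<open>finite I\<close> by (intro dim_le_card') simp
    also have "\<dots> \<le> card I" using \<open>finite I\<close> by (rule card_image_le)
    finally show ?thesis using dim_I \<open>0 \<le> A\<close> by (simp add: mult_left_mono)
  qed
  also have "\<dots> = sum (g \<Phi>) {1..K}"
    unfolding g_def P_def by (rule tight_frame_sum_norm_proj_span_sq[OF tight, symmetric])
  finally have sums: "sum (g \<Psi>) {1..K} \<le> sum (g \<Phi>) {1..K}" .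
  have g_le: "g \<Psi> i \<le> 1 \<and> g \<Phi> i = 1" if "i \<in> I" for i
  proof
    show "g \<Psi> i \<le> 1"
      using norm_proj_span_le[of "\<Psi> ` I" "\<Phi> i"] atoms[of i] that I
      unfolding g_def P_def by (auto simp: power_le_one)
    show "g \<Phi> i = 1"
      using that I atoms[of i] by (auto simp: g_def P_def proj_span_id span_base)
  qed
  have W_nonneg: "0 \<le> W i" for i unfolding W_def by (simp add: sum_nonneg)
  have W_const: "W j = W j'" if "j \<in> {1..K} - I" "j' \<in> {1..K} - I" for j j'
    unfolding W_def by (rule sum_perms_with_leading_atoms_swap[OF that])
  have W_dom: "W j \<le> W i" if "i \<in> I" "j \<in> {1..K} - I" for i j
    unfolding W_def by (rule sum_leading_weights_mono[where c = c, OF c_dec c_nonneg that])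
  have "(\<Sum>i=1..K. W i * g \<Psi> i) \<le> (\<Sum>i=1..K. W i * g \<Phi> i)"
    by (rule weighted_sum_le_of_dominant_weights[OF _ I W_nonneg W_const W_dom g_le sums]) simp
  then show ?thesis using regroup[of \<Psi>] regroup[of \<Phi>] unfolding g_def by simp
qed

lemma oracle_objective_le:
  fixes \<Phi> \<Psi> :: "nat \<Rightarrow> real^'d" and c :: "nat \<Rightarrow> real"
  assumes frame: "unit_norm_tight_frame K \<Phi> A" and "0 \<le> A" and "S \<le> K"
    and c_dec: "\<And>i j. 1 \<le> i \<Longrightarrow> i \<le> j \<Longrightarrow> j \<le> K \<Longrightarrow> c j \<le> c i" and c_nonneg: "0 \<le> c K"
    and dim: "\<And>I. I \<subseteq> {1..K} \<Longrightarrow> card I = S \<Longrightarrow> dim (\<Phi> ` I) = card I"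
  shows "oracle_objective K S \<Phi> c \<Psi> \<le> oracle_objective K S \<Phi> c \<Phi>"
proof -
  let ?h = "\<lambda>\<Psi> p. \<Sum>i=1..K. (c (p i))\<^sup>2 * (norm (P (leading_atoms K S p) \<Psi> (\<Phi> i)))\<^sup>2"
  let ?Ts = "{I. I \<subseteq> {1..K} \<and> card I = S}"
  have "leading_atoms K S p \<in> ?Ts" if "p \<in> perms K" for p
    using that leading_atoms_subset card_leading_atoms \<open>S \<le> K\<close> unfolding perms_def by blast
  then have group: "oracle_objective K S \<Phi> c \<Psi>' = (\<Sum>I\<in>?Ts. \<Sum>p\<in>perms_with_leading_atoms K S I. ?h \<Psi>' p)"
    for \<Psi>' :: "nat \<Rightarrow> real^'d"
    unfolding oracle_objective_def perms_with_leading_atoms_def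
    by (intro sum.group[symmetric, OF finite_perms]) auto
  show ?thesis
    unfolding group
  proof (rule sum_mono)
    fix I assume "I \<in> ?Ts"
    then have "(\<Sum>p\<in>perms_with_leading_atoms K S I. \<Sum>i=1..K. (c (p i))\<^sup>2 * (norm (P I \<Psi> (\<Phi> i)))\<^sup>2)
       \<le> (\<Sum>p\<in>perms_with_leading_atoms K S I. \<Sum>i=1..K. (c (p i))\<^sup>2 * (norm (P I \<Phi> (\<Phi> i)))\<^sup>2)"
      using dim by (intro sum_perms_with_leading_atoms_oracle_le[where c = c, OF frame \<open>0 \<le> A\<close> c_dec c_nonneg]) auto
    moreover have "leading_atoms K S p = I" if "p \<in> perms_with_leading_atoms K S I" for p
      using that unfolding perms_with_leading_atoms_def by simp
    ultimately show "(\<Sum>p\<in>perms_with_leading_atoms K S I. ?h \<Psi> p) \<le> (\<Sum>p\<in>perms_with_leading_atoms K S I. ?h \<Phi> p)"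
      by (simp cong: sum.cong)
  qed
qed

section \<open>Stability of projections under perturbation of the atoms\<close>

lemma span_image_lincomb:
  fixes \<Psi> :: "nat \<Rightarrow> real^'d"
  assumes "finite I" "w \<in> span (\<Psi> ` I)"
  obtains a where "w = (\<Sum>j\<in>I. a j *\<^sub>R \<Psi> j)"
proof -
  have "\<exists>a. w = (\<Sum>j\<in>I. a j *\<^sub>R \<Psi> j)"
    using assms(2)
  proof (induction rule: span_induct_alt)
    case base
    show ?case by (intro exI[of _ "\<lambda>_. 0"]) simp
  next
    case (step r x y)
    then obtain k a where k: "k \<in> I" "x = \<Psi> k" and a: "y = (\<Sum>j\<in>I. a j *\<^sub>R \<Psi> j)" by blast
    have "(\<Sum>j\<in>I. (a j + (if j = k then r else 0)) *\<^sub>R \<Psi> j) = r *\<^sub>R x + y"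
      using k assms(1) by (simp add: a scaleR_add_left sum.distrib if_distrib[of "\<lambda>t. t *\<^sub>R _"] cong: if_cong)
    then show ?case by metis
  qed
  then show thesis using that by blast
qed

lemma abs_sum_inner_diff_le:
  fixes v :: "real^'d"
  assumes "\<And>j. j \<in> I \<Longrightarrow> norm (\<Psi> j - \<Phi> j) \<le> D"
  shows "\<bar>\<Sum>j\<in>I. a j * inner v (\<Psi> j - \<Phi> j)\<bar> \<le> norm v * (\<Sum>j\<in>I. \<bar>a j\<bar>) * D"
proof -
  have "\<bar>\<Sum>j\<in>I. a j * inner v (\<Psi> j - \<Phi> j)\<bar> \<le> (\<Sum>j\<in>I. \<bar>a j\<bar> * (norm v * D))"
  proof (rule order_trans[OF sum_abs], rule sum_mono)
    fix j assume "j \<in> I"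
    have "\<bar>inner v (\<Psi> j - \<Phi> j)\<bar> \<le> norm v * norm (\<Psi> j - \<Phi> j)" by (rule Cauchy_Schwarz_ineq2)
    also have "\<dots> \<le> norm v * D" using assms[OF \<open>j \<in> I\<close>] by (simp add: mult_left_mono)
    finally show "\<bar>a j * inner v (\<Psi> j - \<Phi> j)\<bar> \<le> \<bar>a j\<bar> * (norm v * D)"
      by (simp add: abs_mult mult_left_mono)
  qed
  also have "\<dots> = (\<Sum>j\<in>I. \<bar>a j\<bar>) * (norm v * D)" by (rule sum_distrib_right[symmetric])
  finally show ?thesis by (simp add: algebra_simps)
qed

lemma biorthogonal_exists:
  fixes \<Phi> :: "nat \<Rightarrow> real^'d"
  assumes "\<And>k. k \<in> I \<Longrightarrow> \<Phi> k \<notin> span (\<Phi> ` (I - {k}))"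
  obtains g where "\<And>k j. k \<in> I \<Longrightarrow> j \<in> I \<Longrightarrow> inner (g k) (\<Phi> j) = (if j = k then 1 else 0)"
proof -
  define r where "r k = \<Phi> k - proj_span (\<Phi> ` (I - {k})) (\<Phi> k)" for k
  have r_orth: "inner (r k) (\<Phi> j) = 0" if "j \<in> I - {k}" for k j
    unfolding r_def using that by (intro proj_span_orthogonal span_base) auto
  have r_self: "inner (r k) (\<Phi> k) = (norm (r k))\<^sup>2" for k
  proof -
    have "inner (r k) (proj_span (\<Phi> ` (I - {k})) (\<Phi> k)) = 0"
      unfolding r_def by (rule proj_span_orthogonal[OF proj_span_in_span])
    then show ?thesis by (simp add: r_def inner_diff_right power2_norm_eq_inner)
  qed
  have r_nonzero: "r k \<noteq> 0" if "k \<in> I" for k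
    using assms[OF that] proj_span_in_span[of "\<Phi> ` (I - {k})" "\<Phi> k"] unfolding r_def by auto
  show thesis
  proof (rule that)
    fix k j assume "k \<in> I" "j \<in> I"
    then show "inner ((1 / (norm (r k))\<^sup>2) *\<^sub>R r k) (\<Phi> j) = (if j = k then 1 else 0)"
      using r_orth[of j k] r_self[of k] r_nonzero by (cases "j = k") simp_all
  qed
qed

lemma dim_image_eq_card:
  fixes \<Phi> :: "nat \<Rightarrow> real^'d"
  assumes "finite I" "\<And>k. k \<in> I \<Longrightarrow> \<Phi> k \<notin> span (\<Phi> ` (I - {k}))"
  shows "dim (\<Phi> ` I) = card I"
proof -
  have "inj_on \<Phi> I"
  proof (rule inj_onI, rule ccontr)
    fix a b assume "a \<in> I" "b \<in> I" "\<Phi> a = \<Phi> b" "a \<noteq> b"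
    then have "\<Phi> b \<in> span (\<Phi> ` (I - {b}))" by (intro span_base) (auto intro: image_eqI[of _ _ a])
    then show False using assms(2)[OF \<open>b \<in> I\<close>] by simp
  qed
  moreover have "independent (\<Phi> ` I)"
    unfolding dependent_def
  proof
    assume "\<exists>a\<in>\<Phi> ` I. a \<in> span (\<Phi> ` I - {a})"
    then obtain k where k: "k \<in> I" "\<Phi> k \<in> span (\<Phi> ` I - {\<Phi> k})" by blast
    have "\<Phi> ` I - {\<Phi> k} \<subseteq> \<Phi> ` (I - {k})" by auto
    then have "\<Phi> k \<in> span (\<Phi> ` (I - {k}))" using k(2) span_mono by blast
    then show False using assms(2)[OF k(1)] by simp
  qed
  ultimately show ?thesis by (simp add: dim_eq_card_independent card_image)
qed

lemma inner_div_norm_le_norm_proj_span: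
  assumes "z \<in> span V" "z \<noteq> 0"
  shows "inner y z / norm z \<le> norm (proj_span V y)"
proof -
  have "inner y z = inner (proj_span V y) z" by (rule inner_proj_span[OF assms(1)])
  also have "\<dots> \<le> norm (proj_span V y) * norm z" by (rule norm_cauchy_schwarz)
  finally show ?thesis using assms(2) by (simp add: divide_le_eq)
qed

lemma sum_abs_coeffs_le:
  fixes \<Phi> \<Psi> g :: "nat \<Rightarrow> real^'d"
  assumes fin: "finite I"
    and dual: "\<And>k j. k \<in> I \<Longrightarrow> j \<in> I \<Longrightarrow> inner (g k) (\<Phi> j) = (if j = k then 1 else 0)"
    and small: "(\<Sum>k\<in>I. norm (g k)) * (\<Sum>j\<in>I. norm (\<Psi> j - \<Phi> j)) \<le> 1/2"
    and w: "w = (\<Sum>j\<in>I. a j *\<^sub>R \<Psi> j)"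
  shows "(\<Sum>j\<in>I. \<bar>a j\<bar>) \<le> 2 * (\<Sum>k\<in>I. norm (g k)) * norm w"
proof -
  define G where "G = (\<Sum>k\<in>I. norm (g k))"
  define D where "D = (\<Sum>j\<in>I. norm (\<Psi> j - \<Phi> j))"
  define L where "L = (\<Sum>j\<in>I. \<bar>a j\<bar>)"
  have D_ge: "norm (\<Psi> j - \<Phi> j) \<le> D" if "j \<in> I" for j
    unfolding D_def using fin that by (intro member_le_sum) auto
  have coeff: "\<bar>a k\<bar> \<le> norm (g k) * (norm w + L * D)" if k: "k \<in> I" for k
  proof -
    \<comment> \<open>g k picks out a k from the unperturbed part of w\<close>
    have "inner (g k) w = (\<Sum>j\<in>I. a j * inner (g k) (\<Phi> j)) + (\<Sum>j\<in>I. a j * inner (g k) (\<Psi> j - \<Phi> j))"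
      unfolding w by (simp add: inner_sum_right inner_diff_right sum.distrib[symmetric] algebra_simps)
    also have "(\<Sum>j\<in>I. a j * inner (g k) (\<Phi> j)) = a k"
      using dual[OF k] k fin by (simp add: if_distrib[of "\<lambda>t. _ * t"] cong: if_cong)
    finally have "\<bar>a k\<bar> \<le> \<bar>inner (g k) w\<bar> + \<bar>\<Sum>j\<in>I. a j * inner (g k) (\<Psi> j - \<Phi> j)\<bar>" by linarith
    also have "\<dots> \<le> norm (g k) * norm w + norm (g k) * L * D"
    proof -
      have "\<bar>\<Sum>j\<in>I. a j * inner (g k) (\<Psi> j - \<Phi> j)\<bar> \<le> norm (g k) * L * D"
        unfolding L_def by (rule abs_sum_inner_diff_le) (rule D_ge)
      then show ?thesis using Cauchy_Schwarz_ineq2[of "g k" w] by linarith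
    qed
    finally show ?thesis by (simp add: algebra_simps)
  qed
  have "L \<le> (\<Sum>k\<in>I. norm (g k) * (norm w + L * D))"
    unfolding L_def using coeff by (intro sum_mono) (simp add: L_def)
  also have "\<dots> = G * norm w + G * D * L"
    unfolding G_def by (simp add: sum.distrib sum_distrib_left sum_distrib_right algebra_simps)
  finally have "L \<le> G * norm w + G * D * L" .
  moreover have "G * D * L \<le> L / 2"
    using small mult_right_mono[OF small, of L] unfolding G_def D_def L_def by (simp add: sum_nonneg)
  ultimately show ?thesis unfolding G_def L_def by linarith
qed

lemma norm_proj_span_perturb_le:
  fixes \<Phi> \<Psi> g :: "nat \<Rightarrow> real^'d"
  assumes fin: "finite I"
    and dual: "\<And>k j. k \<in> I \<Longrightarrow> j \<in> I \<Longrightarrow> inner (g k) (\<Phi> j) = (if j = k then 1 else 0)"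
    and small: "(\<Sum>k\<in>I. norm (g k)) * (\<Sum>j\<in>I. norm (\<Psi> j - \<Phi> j)) \<le> 1/2"
  shows "norm (proj_span (\<Psi> ` I) y) \<le> norm (proj_span (\<Phi> ` I) y)
     + 2 * (\<Sum>k\<in>I. norm (g k)) * norm (y - proj_span (\<Phi> ` I) y) * (\<Sum>j\<in>I. norm (\<Psi> j - \<Phi> j))"
proof -
  let ?w = "proj_span (\<Psi> ` I) y"
  let ?Q = "proj_span (\<Phi> ` I) y"
  let ?e = "y - ?Q"
  define G where "G = (\<Sum>k\<in>I. norm (g k))"
  define D where "D = (\<Sum>j\<in>I. norm (\<Psi> j - \<Phi> j))"
  have "G \<ge> 0" "D \<ge> 0" unfolding G_def D_def by (simp_all add: sum_nonneg)
  have D_ge: "norm (\<Psi> j - \<Phi> j) \<le> D" if "j \<in> I" for j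
    unfolding D_def using fin that by (intro member_le_sum) auto
  obtain a where a: "?w = (\<Sum>j\<in>I. a j *\<^sub>R \<Psi> j)"
    using span_image_lincomb[OF fin proj_span_in_span] by blast
  have L: "(\<Sum>j\<in>I. \<bar>a j\<bar>) \<le> 2 * G * norm ?w"
    unfolding G_def by (rule sum_abs_coeffs_le[OF fin dual small a])
  have "inner ?e (\<Phi> j) = 0" if "j \<in> I" for j
    using that by (intro proj_span_orthogonal span_base) auto
  then have "inner ?e ?w = (\<Sum>j\<in>I. a j * inner ?e (\<Psi> j - \<Phi> j))"
    unfolding a by (simp add: inner_sum_right inner_diff_right algebra_simps)
  then have "(norm ?w)\<^sup>2 = inner ?Q ?w + (\<Sum>j\<in>I. a j * inner ?e (\<Psi> j - \<Phi> j))"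
    by (simp add: norm_proj_span_sq inner_diff_left)
  also have "\<dots> \<le> norm ?Q * norm ?w + norm ?e * (\<Sum>j\<in>I. \<bar>a j\<bar>) * D"
  proof -
    have "\<bar>\<Sum>j\<in>I. a j * inner ?e (\<Psi> j - \<Phi> j)\<bar> \<le> norm ?e * (\<Sum>j\<in>I. \<bar>a j\<bar>) * D"
      by (rule abs_sum_inner_diff_le) (rule D_ge)
    then show ?thesis using norm_cauchy_schwarz[of ?Q ?w] by linarith
  qed
  also have "\<dots> \<le> norm ?Q * norm ?w + norm ?e * (2 * G * norm ?w) * D"
    using L \<open>D \<ge> 0\<close> by (simp add: mult_left_mono mult_right_mono)
  finally have "norm ?w * norm ?w \<le> norm ?w * (norm ?Q + 2 * G * norm ?e * D)"
    by (simp add: power2_eq_square algebra_simps)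
  then have "norm ?w \<le> norm ?Q + 2 * G * norm ?e * D"
    using \<open>G \<ge> 0\<close> \<open>D \<ge> 0\<close> by (cases "norm ?w = 0") (auto simp: mult_le_cancel_left)
  then show ?thesis unfolding G_def D_def .
qed

text \<open>The neighbourhoods used by local_max_on_dicts: only the atoms 1..K are constrained.\<close>
definition dict_nhds :: "nat \<Rightarrow> (nat \<Rightarrow> real^'d) \<Rightarrow> (nat \<Rightarrow> real^'d) filter" where
  "dict_nhds K \<Phi> = (INF e\<in>{0<..}. principal {\<Psi>. \<forall>i\<in>{1..K}. norm (\<Psi> i - \<Phi> i) < (e::real)})"

lemma eventually_dict_nhds:
  "eventually R (dict_nhds K \<Phi>) \<longleftrightarrow> (\<exists>e>0. \<forall>\<Psi>. (\<forall>i\<in>{1..K}. norm (\<Psi> i - \<Phi> i) < e) \<longrightarrow> R \<Psi>)"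
proof -
  have "eventually R (dict_nhds K \<Phi>) \<longleftrightarrow>
     (\<exists>e\<in>{0<..}. eventually R (principal {\<Psi>. \<forall>i\<in>{1..K}. norm (\<Psi> i - \<Phi> i) < (e::real)}))"
    unfolding dict_nhds_def
  proof (rule eventually_INF_base)
    fix a b :: real assume "a \<in> {0<..}" "b \<in> {0<..}"
    then show "\<exists>x\<in>{0<..}. principal {\<Psi>. \<forall>i\<in>{1..K}. norm (\<Psi> i - \<Phi> i) < x}
        \<le> inf (principal {\<Psi>. \<forall>i\<in>{1..K}. norm (\<Psi> i - \<Phi> i) < a})
               (principal {\<Psi>. \<forall>i\<in>{1..K}. norm (\<Psi> i - \<Phi> i) < b})"
      by (intro bexI[of _ "min a b"]) auto
  qed auto
  then show ?thesis by (auto simp: eventually_principal)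
qed

lemma tendsto_atom_dict_nhds:
  fixes \<Phi> :: "nat \<Rightarrow> real^'d"
  assumes "i \<in> {1..K}"
  shows "((\<lambda>\<Psi>. \<Psi> i) \<longlongrightarrow> \<Phi> i) (dict_nhds K \<Phi>)"
  unfolding tendsto_iff eventually_dict_nhds using assms by (auto simp: dist_norm)

lemma eventually_norm_proj_span_gt:
  fixes \<Phi> :: "nat \<Rightarrow> real^'d"
  assumes J: "J \<subseteq> {1..K}" and gt: "m < norm (proj_span (\<Phi> ` J) y)"
  shows "eventually (\<lambda>\<Psi>. m < norm (proj_span (\<Psi> ` J) y)) (dict_nhds K \<Phi>)"
proof (cases "m < 0")
  case True
  then show ?thesis by (simp add: less_le_trans[OF True norm_ge_zero])
next
  case False
  let ?F = "dict_nhds K \<Phi>"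
  define z where "z = proj_span (\<Phi> ` J) y"
  have "norm z > 0" using gt False unfolding z_def by linarith
  obtain b where b: "z = (\<Sum>j\<in>J. b j *\<^sub>R \<Phi> j)"
    using span_image_lincomb[OF finite_subset[OF J] proj_span_in_span] unfolding z_def by blast
  \<comment> \<open>the same combination of the perturbed atoms witnesses a large projection onto span (\<Psi> ` J)\<close>
  define z' where "z' \<Psi> = (\<Sum>j\<in>J. b j *\<^sub>R \<Psi> j)" for \<Psi> :: "nat \<Rightarrow> real^'d"
  have z'_lim: "(z' \<longlongrightarrow> z) ?F"
    unfolding z'_def b by (intro tendsto_intros tendsto_atom_dict_nhds) (use J in auto)
  have "((\<lambda>\<Psi>. inner y (z' \<Psi>) / norm (z' \<Psi>)) \<longlongrightarrow> inner y z / norm z) ?F"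
    using \<open>norm z > 0\<close> by (intro tendsto_intros z'_lim) auto
  moreover have "inner y z = norm z * norm z"
    using norm_proj_span_sq[of "\<Phi> ` J" y] unfolding z_def by (simp add: power2_eq_square)
  ultimately have "((\<lambda>\<Psi>. inner y (z' \<Psi>) / norm (z' \<Psi>)) \<longlongrightarrow> norm z) ?F"
    using \<open>norm z > 0\<close> by simp
  then have "eventually (\<lambda>\<Psi>. m < inner y (z' \<Psi>) / norm (z' \<Psi>)) ?F"
    using gt unfolding z_def by (rule order_tendstoD(1))
  moreover have "eventually (\<lambda>\<Psi>. 0 < norm (z' \<Psi>)) ?F"
    by (rule order_tendstoD(1)[OF tendsto_norm[OF z'_lim] \<open>norm z > 0\<close>])
  ultimately show ?thesis
  proof eventually_elim
    case (elim \<Psi>)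
    have "inner y (z' \<Psi>) / norm (z' \<Psi>) \<le> norm (proj_span (\<Psi> ` J) y)"
      using elim(2) by (intro inner_div_norm_le_norm_proj_span) (auto simp: z'_def intro: span_sum span_mul span_base)
    then show ?case using elim(1) by simp
  qed
qed

lemma eventually_norm_proj_span_lt:
  fixes \<Phi> g :: "nat \<Rightarrow> real^'d"
  assumes I: "I \<subseteq> {1..K}"
    and dual: "\<And>k j. k \<in> I \<Longrightarrow> j \<in> I \<Longrightarrow> inner (g k) (\<Phi> j) = (if j = k then 1 else 0)"
    and lt: "norm (proj_span (\<Phi> ` I) y) < m"
  shows "eventually (\<lambda>\<Psi>. norm (proj_span (\<Psi> ` I) y) < m) (dict_nhds K \<Phi>)"
proof -
  let ?F = "dict_nhds K \<Phi>"
  let ?Q = "proj_span (\<Phi> ` I) y"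
  define G where "G = (\<Sum>k\<in>I. norm (g k))"
  define D where "D \<Psi> = (\<Sum>j\<in>I. norm (\<Psi> j - \<Phi> j))" for \<Psi> :: "nat \<Rightarrow> real^'d"
  have "(D \<longlongrightarrow> (\<Sum>j\<in>I. norm (\<Phi> j - \<Phi> j))) ?F"
    unfolding D_def by (intro tendsto_intros tendsto_atom_dict_nhds) (use I in auto)
  then have D_lim: "(D \<longlongrightarrow> 0) ?F" by simp
  have "((\<lambda>\<Psi>. norm ?Q + 2 * G * norm (y - ?Q) * D \<Psi>) \<longlongrightarrow> norm ?Q + 2 * G * norm (y - ?Q) * 0) ?F"
    by (intro tendsto_intros D_lim)
  then have "eventually (\<lambda>\<Psi>. norm ?Q + 2 * G * norm (y - ?Q) * D \<Psi> < m) ?F"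
    using lt by (intro order_tendstoD(2)) simp_all
  moreover have "((\<lambda>\<Psi>. G * D \<Psi>) \<longlongrightarrow> G * 0) ?F" by (intro tendsto_intros D_lim)
  then have "eventually (\<lambda>\<Psi>. G * D \<Psi> < 1/2) ?F" by (rule order_tendstoD(2)) simp
  ultimately show ?thesis
  proof eventually_elim
    case (elim \<Psi>)
    have "G * D \<Psi> \<le> 1/2" using elim(2) by simp
    then have "norm (proj_span (\<Psi> ` I) y) \<le> norm ?Q + 2 * G * norm (y - ?Q) * D \<Psi>"
      using norm_proj_span_perturb_le[OF finite_subset[OF I] dual, of \<Psi> y] unfolding G_def D_def by simp
    then show ?case using elim(1) by simp
  qed
qed

lemma eventually_norm_proj_span_le:
  fixes \<Phi> g :: "nat \<Rightarrow> real^'d"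
  assumes "I \<subseteq> {1..K}" "J \<subseteq> {1..K}"
    and "\<And>k j. k \<in> I \<Longrightarrow> j \<in> I \<Longrightarrow> inner (g k) (\<Phi> j) = (if j = k then 1 else 0)"
    and lt: "norm (proj_span (\<Phi> ` I) y) < norm (proj_span (\<Phi> ` J) y)"
  shows "eventually (\<lambda>\<Psi>. norm (proj_span (\<Psi> ` I) y) \<le> norm (proj_span (\<Psi> ` J) y)) (dict_nhds K \<Phi>)"
proof -
  define m where "m = (norm (proj_span (\<Phi> ` I) y) + norm (proj_span (\<Phi> ` J) y)) / 2"
  have lo: "norm (proj_span (\<Phi> ` I) y) < m" and hi: "m < norm (proj_span (\<Phi> ` J) y)"
    using lt unfolding m_def by simp_all
  have "eventually (\<lambda>\<Psi>. norm (proj_span (\<Psi> ` I) y) < m) (dict_nhds K \<Phi>)"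
    by (rule eventually_norm_proj_span_lt[OF assms(1,3) lo])
  moreover have "eventually (\<lambda>\<Psi>. m < norm (proj_span (\<Psi> ` J) y)) (dict_nhds K \<Phi>)"
    by (rule eventually_norm_proj_span_gt[OF assms(2) hi])
  ultimately show ?thesis by eventually_elim simp
qed

section \<open>Local maximality\<close>

lemma not_in_span_of_strict_gap:
  fixes \<Phi> :: "nat \<Rightarrow> real^'d" and v :: "(nat \<Rightarrow> nat) \<Rightarrow> real^'d"
  assumes "S \<le> K"
    and gap: "\<And>p I. p \<in> perms K \<Longrightarrow> I \<subseteq> {1..K} \<Longrightarrow> card I \<le> S \<Longrightarrow> I \<noteq> leading_atoms K S p \<Longrightarrow>
               norm (P I \<Phi> (v p)) < norm (P (leading_atoms K S p) \<Phi> (v p))"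
    and I: "I \<subseteq> {1..K}" "card I \<le> S" and "k \<in> I"
  shows "\<Phi> k \<notin> span (\<Phi> ` (I - {k}))"
proof
  assume k_span: "\<Phi> k \<in> span (\<Phi> ` (I - {k}))"
  have "finite I" using I(1) finite_subset by blast
  \<comment> \<open>enlarge I to a set of exactly S atoms, which is the leading set of some permutation\<close>
  have "S - card I \<le> card ({1..K} - I)" using I \<open>S \<le> K\<close> \<open>finite I\<close> by (simp add: card_Diff_subset)
  then obtain T where T: "T \<subseteq> {1..K} - I" "card T = S - card I" "finite T"
    by (rule obtain_subset_with_card_n)
  define J where "J = I \<union> T"
  have "card J = S" unfolding J_def using T I \<open>finite I\<close> by (subst card_Un_disjoint) auto
  moreover have "J \<subseteq> {1..K}" "k \<in> J" unfolding J_def using I T \<open>k \<in> I\<close> by auto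
  ultimately have J: "J \<subseteq> {1..K}" "card J = S" "k \<in> J" by simp_all
  obtain p where p: "p permutes {1..K}" "leading_atoms K S p = J"
    using permutes_with_leading_atoms[OF J(1,2) \<open>S \<le> K\<close>] by blast
  have "\<Phi> k \<in> span (\<Phi> ` (J - {k}))"
    using k_span span_mono[of "\<Phi> ` (I - {k})" "\<Phi> ` (J - {k})"] unfolding J_def by auto
  then have "span (insert (\<Phi> k) (\<Phi> ` (J - {k}))) = span (\<Phi> ` (J - {k}))"
    by (rule span_redundant)
  moreover have "insert (\<Phi> k) (\<Phi> ` (J - {k})) = \<Phi> ` J" using \<open>k \<in> J\<close> by auto
  ultimately have "span (\<Phi> ` J) = span (\<Phi> ` (J - {k}))" by simp
  then have "P J \<Phi> = P (J - {k}) \<Phi>" unfolding P_def by (intro ext proj_span_cong)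
  moreover have "norm (P (J - {k}) \<Phi> (v p)) < norm (P J \<Phi> (v p))"
    using gap[of p "J - {k}"] p J by (auto simp: perms_def card_Diff_singleton_if)
  ultimately show False by simp
qed

definition leading_atoms_optimal ::
    "nat \<Rightarrow> nat \<Rightarrow> (nat \<Rightarrow> real^'d) \<Rightarrow> (nat \<Rightarrow> real) \<Rightarrow> (nat \<Rightarrow> real^'d) \<Rightarrow> bool" where
  "leading_atoms_optimal K S \<Phi> c \<Psi> \<longleftrightarrow>
     (\<forall>p\<in>perms K. \<forall>\<sigma>\<in>signs K. \<forall>I\<in>{I. I \<subseteq> {1..K} \<and> card I \<le> S}.
        norm (P I \<Psi> (synth K \<Phi> (c_ps c p \<sigma>)))
          \<le> norm (P (leading_atoms K S p) \<Psi> (synth K \<Phi> (c_ps c p \<sigma>))))"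

lemma eventually_leading_atoms_optimal:
  fixes \<Phi> :: "nat \<Rightarrow> real^'d" and c :: "nat \<Rightarrow> real"
  assumes indep: "\<And>I k. I \<subseteq> {1..K} \<Longrightarrow> card I \<le> S \<Longrightarrow> k \<in> I \<Longrightarrow> \<Phi> k \<notin> span (\<Phi> ` (I - {k}))"
    and gap: "\<And>p \<sigma> I. p \<in> perms K \<Longrightarrow> \<sigma> \<in> signs K \<Longrightarrow> I \<subseteq> {1..K} \<Longrightarrow> card I \<le> S \<Longrightarrow>
               I \<noteq> leading_atoms K S p \<Longrightarrow>
               norm (P I \<Phi> (synth K \<Phi> (c_ps c p \<sigma>)))
                 < norm (P (leading_atoms K S p) \<Phi> (synth K \<Phi> (c_ps c p \<sigma>)))"
  shows "eventually (leading_atoms_optimal K S \<Phi> c) (dict_nhds K \<Phi>)"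
proof -
  have "finite {I. I \<subseteq> {1..K} \<and> card I \<le> S}" by (rule finite_subset[of _ "Pow {1..K}"]) auto
  moreover have "finite (signs K)" unfolding signs_def by (intro finite_PiE) auto
  moreover have "eventually (\<lambda>\<Psi>. norm (P I \<Psi> (synth K \<Phi> (c_ps c p \<sigma>)))
          \<le> norm (P (leading_atoms K S p) \<Psi> (synth K \<Phi> (c_ps c p \<sigma>)))) (dict_nhds K \<Phi>)"
    if hyps: "p \<in> perms K" "\<sigma> \<in> signs K" "I \<subseteq> {1..K}" "card I \<le> S" for p \<sigma> I
  proof (cases "I = leading_atoms K S p")
    case False
    obtain g where "\<And>k j. k \<in> I \<Longrightarrow> j \<in> I \<Longrightarrow> inner (g k) (\<Phi> j) = (if j = k then 1 else 0)"
      using biorthogonal_exists[of I \<Phi>] indep[OF hyps(3,4)] by blast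
    from eventually_norm_proj_span_le[OF hyps(3) leading_atoms_subset this]
    show ?thesis using gap[OF hyps False] unfolding P_def by blast
  qed simp
  ultimately show ?thesis
    unfolding leading_atoms_optimal_def by (intro eventually_ball_finite ballI finite_perms) auto
qed

lemma objective_eq_oracle_objective:
  fixes \<Phi> \<Psi> :: "nat \<Rightarrow> real^'d" and c :: "nat \<Rightarrow> real"
  assumes "S \<le> K" and opt: "leading_atoms_optimal K S \<Phi> c \<Psi>"
  shows "objective K S \<Phi> c \<Psi> = oracle_objective K S \<Phi> c \<Psi> / fact K"
proof -
  have "Max {(norm (P I \<Psi> (synth K \<Phi> (c_ps c p \<sigma>))))\<^sup>2 | I. I \<subseteq> {1..K} \<and> card I \<le> S}
      = (norm (P (leading_atoms K S p) \<Psi> (synth K \<Phi> (c_ps c p \<sigma>))))\<^sup>2"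
    if p: "p \<in> perms K" and \<sigma>: "\<sigma> \<in> signs K" for p \<sigma>
  proof (rule Max_eqI)
    show "finite {(norm (P I \<Psi> (synth K \<Phi> (c_ps c p \<sigma>))))\<^sup>2 | I. I \<subseteq> {1..K} \<and> card I \<le> S}"
      using finite_subset[of "{I. I \<subseteq> {1..K} \<and> card I \<le> S}" "Pow {1..K}"] by auto
    show "(norm (P (leading_atoms K S p) \<Psi> (synth K \<Phi> (c_ps c p \<sigma>))))\<^sup>2
        \<in> {(norm (P I \<Psi> (synth K \<Phi> (c_ps c p \<sigma>))))\<^sup>2 | I. I \<subseteq> {1..K} \<and> card I \<le> S}"
      using p \<open>S \<le> K\<close> leading_atoms_subset card_leading_atoms unfolding perms_def by fastforce
  qed (use opt p \<sigma> in \<open>auto simp: leading_atoms_optimal_def intro!: power_mono\<close>)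
  then have "objective K S \<Phi> c \<Psi> = (1 / (2 ^ K * fact K)) *
      (\<Sum>p\<in>perms K. \<Sum>\<sigma>\<in>signs K. (norm (P (leading_atoms K S p) \<Psi> (synth K \<Phi> (c_ps c p \<sigma>))))\<^sup>2)"
    unfolding objective_def by simp
  also have "\<dots> = oracle_objective K S \<Phi> c \<Psi> / fact K"
    unfolding oracle_objective_def P_def
    by (simp add: sum_signs_norm_proj_span_synth_sq sum_distrib_left[symmetric])
  finally show ?thesis .
qed

theorem theorem5:
  fixes \<Phi> :: "nat \<Rightarrow> real^'d" and K S :: nat and c :: "nat \<Rightarrow> real"
  assumes frame: "unit_norm_tight_frame K \<Phi> (real K / real CARD('d))"
    and S: "1 \<le> S" "S \<le> K"
    and c_dec: "\<And>i j. 1 \<le> i \<Longrightarrow> i \<le> j \<Longrightarrow> j \<le> K \<Longrightarrow> c j \<le> c i"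
    and c_nonneg: "c K \<ge> 0"
    and c_norm: "sqrt (\<Sum>i=1..K. (c i)\<^sup>2) = 1"
    and gap: "\<And>p \<sigma> I. p \<in> perms K \<Longrightarrow> \<sigma> \<in> signs K \<Longrightarrow>
               I \<subseteq> {1..K} \<Longrightarrow> card I \<le> S \<Longrightarrow> I \<noteq> p -` {1..S} \<inter> {1..K} \<Longrightarrow>
               norm (P I \<Phi> (synth K \<Phi> (c_ps c p \<sigma>)))
                 < norm (P (p -` {1..S} \<inter> {1..K}) \<Phi> (synth K \<Phi> (c_ps c p \<sigma>)))"
  shows "local_max_on_dicts K (objective K S \<Phi> c) \<Phi>"
proof -
  note gap = gap[folded leading_atoms_def]
  obtain \<sigma> where \<sigma>: "\<sigma> \<in> signs K"
    unfolding signs_def by (meson PiE_eq_empty_iff ex_in_conv insert_not_empty)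
  have indep: "\<Phi> k \<notin> span (\<Phi> ` (I - {k}))" if "I \<subseteq> {1..K}" "card I \<le> S" "k \<in> I" for I k
    by (rule not_in_span_of_strict_gap[OF S(2) gap[OF _ \<sigma>] that])
  obtain e where "e > 0"
    and opt: "\<And>\<Psi>. \<forall>i\<in>{1..K}. norm (\<Psi> i - \<Phi> i) < e \<Longrightarrow> leading_atoms_optimal K S \<Phi> c \<Psi>"
    using eventually_leading_atoms_optimal[OF indep gap] unfolding eventually_dict_nhds by blast
  have "oracle_objective K S \<Phi> c \<Psi> \<le> oracle_objective K S \<Phi> c \<Phi>" for \<Psi>
    using indep by (intro oracle_objective_le[where c = c, OF frame _ S(2) c_dec c_nonneg] dim_image_eq_card)
                   (auto intro: finite_subset)
  \<comment> \<open>\<Phi> lies in its own neighbourhood, so both objectives reduce to oracle objectives\<close>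
  then have "objective K S \<Phi> c \<Psi> \<le> objective K S \<Phi> c \<Phi>"
    if "\<forall>i\<in>{1..K}. norm (\<Psi> i - \<Phi> i) < e" for \<Psi>
    using objective_eq_oracle_objective[OF S(2) opt] that \<open>e > 0\<close> by (simp add: divide_right_mono)
  moreover have "is_dict K \<Phi>" using frame unfolding unit_norm_tight_frame_def by simp
  ultimately show ?thesis unfolding local_max_on_dicts_def using \<open>e > 0\<close> by blast
qed

end
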